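(* Let $\sigma_1,\sigma_2\subset\mathbb{Q}^n$ be rational polyhedral cones and suppose there is a vector $\mathbf{a}\in\sigma_1\cap\sigma_2$ such that $\mathrm{span}_{\mathbb{Q}}(\sigma_1)\cap\mathrm{span}_{\mathbb{Q}}(\sigma_2)=\mathbb{Q}\mathbf{a}$. Let $\sigma_1\oplus\sigma_2:=\mathrm{pos}_{\mathbb{Q}}(\sigma_1\cup\sigma_2)$. Then $\sigma_1$ and $\sigma_2$ are both strongly convex if and only if $\sigma_1\oplus\sigma_2$ is strongly convex.
   Context: For $B\subset\mathbb{Q}^n$, $\mathrm{span}_{\mathbb{Q}}(B)=\{\sum q_i\mathbf{b}_i: q_i\in\mathbb{Q},\mathbf{b}_i\in B\}$ (finite sums) and $\mathrm{pos}_{\mathbb{Q}}(B)=\{\sum q_i\mathbf{b}_i: q_i\in\mathbb{Q}_{\ge 0},\mathbf{b}_i\in B\}$. A rational polyhedral cone is $\mathrm{pos}_{\mathbb{Q}}(B)$ for a finite $B\subset\mathbb{Q}^n$. A cone $\sigma$ is strongly convex if $\sigma\cap(-\sigma)=\{\mathbf{0}\}$. *)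

theory Defs
  imports "HOL-Analysis.Finite_Cartesian_Product"
begin

definition qspan :: "(rat ^ 'n) set \<Rightarrow> (rat ^ 'n) set" where
  "qspan B = {x. \<exists>S c. finite S \<and> S \<subseteq> B \<and> x = (\<Sum>b\<in>S. c b *s b)}"

definition qpos :: "(rat ^ 'n) set \<Rightarrow> (rat ^ 'n) set" where
  "qpos B = {x. \<exists>S c. finite S \<and> S \<subseteq> B \<and> (\<forall>b\<in>S. c b \<ge> 0) \<and> x = (\<Sum>b\<in>S. c b *s b)}"

definition rational_polyhedral_cone :: "(rat ^ 'n) set \<Rightarrow> bool" where
  "rational_polyhedral_cone \<sigma> \<longleftrightarrow> (\<exists>B. finite B \<and> \<sigma> = qpos B)"

definition strongly_convex :: "(rat ^ 'n) set \<Rightarrow> bool" where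
  "strongly_convex \<sigma> \<longleftrightarrow> \<sigma> \<inter> uminus ` \<sigma> = {0}"

end

theory Submission
  imports Defs
begin

text \<open>
  Strong convexity passes to subcones containing 0, which gives one direction.
  Conversely, let \<open>x\<close> and \<open>-x\<close> lie in \<open>\<sigma>1 \<oplus> \<sigma>2\<close>, say \<open>x = u1 + u2\<close> and
  \<open>-x = v1 + v2\<close> with \<open>ui, vi \<in> \<sigma>i\<close>. Then \<open>u1 + v1 = -(u2 + v2)\<close> lies in both
  spans, hence equals \<open>q a\<close>. If \<open>q \<ge> 0\<close> it also lies in \<open>\<sigma>2\<close>, so
  \<open>u2 + v2 + (u1 + v1) = 0\<close> is a vanishing sum in the pointed cone \<open>\<sigma>2\<close>: all three
  terms vanish, and then so do \<open>u1\<close> and \<open>v1\<close>. If \<open>q < 0\<close> the roles of \<open>\<sigma>1\<close> and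
  \<open>\<sigma>2\<close> are exchanged.
\<close>

definition qcone :: "(rat ^ 'n) set \<Rightarrow> bool" where
  "qcone \<sigma> \<longleftrightarrow> 0 \<in> \<sigma> \<and> (\<forall>x\<in>\<sigma>. \<forall>y\<in>\<sigma>. x + y \<in> \<sigma>) \<and> (\<forall>x\<in>\<sigma>. \<forall>c\<ge>0. c *s x \<in> \<sigma>)"

lemma qcone_zero: "qcone \<sigma> \<Longrightarrow> 0 \<in> \<sigma>"
  and qcone_add: "qcone \<sigma> \<Longrightarrow> x \<in> \<sigma> \<Longrightarrow> y \<in> \<sigma> \<Longrightarrow> x + y \<in> \<sigma>"
  and qcone_smult: "qcone \<sigma> \<Longrightarrow> x \<in> \<sigma> \<Longrightarrow> c \<ge> 0 \<Longrightarrow> c *s x \<in> \<sigma>"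
  unfolding qcone_def by blast+

lemma qcone_sum:
  assumes "qcone \<sigma>" "finite S" "S \<subseteq> \<sigma>" "\<forall>b\<in>S. c b \<ge> 0"
  shows "(\<Sum>b\<in>S. c b *s b) \<in> \<sigma>"
  using assms(2-4)
proof (induction S rule: finite_induct)
  case empty
  then show ?case using assms(1) by (simp add: qcone_def)
next
  case (insert x F)
  then show ?case using assms(1) by (simp add: qcone_def)
qed

lemma subset_qpos: "B \<subseteq> qpos B"
proof
  fix x assume "x \<in> B"
  then show "x \<in> qpos B"
    unfolding qpos_def by (intro CollectI exI[of _ "{x}"] exI[of _ "\<lambda>_. 1"]) simp
qed

lemma qpos_add:
  assumes "x \<in> qpos B" "y \<in> qpos B"
  shows "x + y \<in> qpos B"
proof -
  obtain S c where S: "finite S" "S \<subseteq> B" "\<forall>b\<in>S. c b \<ge> 0" "x = (\<Sum>b\<in>S. c b *s b)"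
    using assms(1) unfolding qpos_def by blast
  obtain T d where T: "finite T" "T \<subseteq> B" "\<forall>b\<in>T. d b \<ge> 0" "y = (\<Sum>b\<in>T. d b *s b)"
    using assms(2) unfolding qpos_def by blast
  define e where "e b = (if b \<in> S then c b else 0) + (if b \<in> T then d b else 0)" for b
  have "x + y
      = (\<Sum>b\<in>S \<union> T. if b \<in> S then c b *s b else 0) + (\<Sum>b\<in>S \<union> T. if b \<in> T then d b *s b else 0)"
    using S T by (simp add: sum.inter_restrict[symmetric] Un_Int_eq)
  also have "\<dots> = (\<Sum>b\<in>S \<union> T. e b *s b)"
    unfolding sum.distrib[symmetric] by (rule sum.cong) (auto simp: e_def vector_sadd_rdistrib)
  finally have "x + y = (\<Sum>b\<in>S \<union> T. e b *s b)" .
  moreover have "\<forall>b\<in>S \<union> T. e b \<ge> 0" using S T unfolding e_def by auto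
  ultimately show ?thesis
    using S T unfolding qpos_def by (intro CollectI exI[of _ "S \<union> T"] exI[of _ e]) auto
qed

lemma qpos_smult:
  assumes "x \<in> qpos B" "q \<ge> 0"
  shows "q *s x \<in> qpos B"
proof -
  obtain S c where S: "finite S" "S \<subseteq> B" "\<forall>b\<in>S. c b \<ge> 0" "x = (\<Sum>b\<in>S. c b *s b)"
    using assms(1) unfolding qpos_def by blast
  have "q *s x = (\<Sum>b\<in>S. (q * c b) *s b)"
    by (simp add: S(4) vec_eq_iff sum_distrib_left mult.assoc)
  then show ?thesis
    using S assms(2) unfolding qpos_def
    by (intro CollectI exI[of _ S] exI[of _ "\<lambda>b. q * c b"]) auto
qed

lemma qcone_qpos: "qcone (qpos B)"
proof -
  have "0 \<in> qpos B"
    unfolding qpos_def by (intro CollectI exI[of _ "{}"]) simp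
  then show ?thesis
    unfolding qcone_def using qpos_add qpos_smult by blast
qed

lemma rational_polyhedral_cone_imp_qcone: "rational_polyhedral_cone \<sigma> \<Longrightarrow> qcone \<sigma>"
  unfolding rational_polyhedral_cone_def using qcone_qpos by blast

lemma qpos_Un_decompose:
  assumes "qcone \<sigma>1" "qcone \<sigma>2" "x \<in> qpos (\<sigma>1 \<union> \<sigma>2)"
  obtains u1 u2 where "u1 \<in> \<sigma>1" "u2 \<in> \<sigma>2" "x = u1 + u2"
proof -
  obtain S c where S: "finite S" "S \<subseteq> \<sigma>1 \<union> \<sigma>2" "\<forall>b\<in>S. c b \<ge> 0" "x = (\<Sum>b\<in>S. c b *s b)"
    using assms(3) unfolding qpos_def by blast
  have "x = (\<Sum>b\<in>S \<inter> \<sigma>1. c b *s b) + (\<Sum>b\<in>S - \<sigma>1. c b *s b)"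
    unfolding S(4) by (rule sum.Int_Diff[OF S(1)])
  moreover have "(\<Sum>b\<in>S \<inter> \<sigma>1. c b *s b) \<in> \<sigma>1"
    by (rule qcone_sum) (use assms S in auto)
  moreover have "(\<Sum>b\<in>S - \<sigma>1. c b *s b) \<in> \<sigma>2"
    by (rule qcone_sum) (use assms S in auto)
  ultimately show ?thesis using that by blast
qed

lemma smult_mem_qspan: "y \<in> \<sigma> \<Longrightarrow> q *s y \<in> qspan \<sigma>"
  unfolding qspan_def by (intro CollectI exI[of _ "{y}"] exI[of _ "\<lambda>_. q"]) simp

lemma strongly_convexI:
  assumes "0 \<in> \<sigma>" "\<And>x. x \<in> \<sigma> \<Longrightarrow> - x \<in> \<sigma> \<Longrightarrow> x = 0"
  shows "strongly_convex \<sigma>"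
  unfolding strongly_convex_def using assms by (force simp: image_iff)

lemma strongly_convex_subset:
  assumes "strongly_convex \<tau>" "\<sigma> \<subseteq> \<tau>" "0 \<in> \<sigma>"
  shows "strongly_convex \<sigma>"
  using assms unfolding strongly_convex_def by (force simp: image_iff)

lemma strongly_convex_add_eq_0:
  assumes "strongly_convex \<sigma>" "u \<in> \<sigma>" "v \<in> \<sigma>" "u + v = 0"
  shows "u = 0"
proof -
  have "u = - v" using assms(4) by (simp add: eq_neg_iff_add_eq_0)
  then show ?thesis using assms(1-3) unfolding strongly_convex_def by blast
qed

lemma strongly_convex_sum_eq_0:
  assumes "strongly_convex \<sigma>1" "strongly_convex \<sigma>2" "qcone \<sigma>2"
    and "u1 \<in> \<sigma>1" "v1 \<in> \<sigma>1" "u2 \<in> \<sigma>2" "v2 \<in> \<sigma>2" "u1 + v1 \<in> \<sigma>2"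
    and "(u1 + v1) + (u2 + v2) = 0"
  shows "u1 = 0 \<and> u2 = 0"
proof -
  have "v2 + (u1 + v1) \<in> \<sigma>2" using qcone_add[OF assms(3,7,8)] .
  moreover have "u2 + (v2 + (u1 + v1)) = 0" using assms(9) by (simp add: algebra_simps)
  ultimately have u2: "u2 = 0" using strongly_convex_add_eq_0[OF assms(2,6)] by blast
  then have "v2 + (u1 + v1) = 0" using assms(9) by (simp add: algebra_simps)
  then have "u1 + v1 + v2 = 0" by (simp add: algebra_simps)
  then have "u1 + v1 = 0" using strongly_convex_add_eq_0[OF assms(2,8,7)] by blast
  then have "u1 = 0" using strongly_convex_add_eq_0[OF assms(1,4,5)] by blast
  with u2 show ?thesis by simp
qed

lemma qspan_Int_line_mem_or_neg_mem:
  assumes "qcone \<sigma>1" "qcone \<sigma>2" "a \<in> \<sigma>1 \<inter> \<sigma>2"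
    and "qspan \<sigma>1 \<inter> qspan \<sigma>2 \<subseteq> {q *s a | q. True}"
    and "w \<in> \<sigma>1" "- w \<in> \<sigma>2"
  shows "w \<in> \<sigma>2 \<or> - w \<in> \<sigma>1"
proof -
  have "w \<in> qspan \<sigma>1" using smult_mem_qspan[OF assms(5), of 1] by simp
  moreover have "w \<in> qspan \<sigma>2" using smult_mem_qspan[OF assms(6), of "-1"] by (simp add: vector_smult_lneg)
  ultimately obtain q where q: "w = q *s a" using assms(4) by blast
  show ?thesis
  proof (cases "q \<ge> 0")
    case True
    then show ?thesis using q qcone_smult[OF assms(2)] assms(3) by simp
  next
    case False
    have "- w = (- q) *s a" using q by (simp add: vector_smult_lneg)
    then show ?thesis using False qcone_smult[OF assms(1)] assms(3) by simp
  qed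
qed

lemma strongly_convex_qpos_Un:
  assumes "qcone \<sigma>1" "qcone \<sigma>2" "strongly_convex \<sigma>1" "strongly_convex \<sigma>2"
    and "a \<in> \<sigma>1 \<inter> \<sigma>2" "qspan \<sigma>1 \<inter> qspan \<sigma>2 \<subseteq> {q *s a | q. True}"
  shows "strongly_convex (qpos (\<sigma>1 \<union> \<sigma>2))"
proof (rule strongly_convexI)
  show "0 \<in> qpos (\<sigma>1 \<union> \<sigma>2)" using qcone_zero[OF qcone_qpos] .
next
  fix x assume x: "x \<in> qpos (\<sigma>1 \<union> \<sigma>2)" and minus_x: "- x \<in> qpos (\<sigma>1 \<union> \<sigma>2)"
  obtain u1 u2 where u: "u1 \<in> \<sigma>1" "u2 \<in> \<sigma>2" "x = u1 + u2"
    using qpos_Un_decompose[OF assms(1,2) x] .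
  obtain v1 v2 where v: "v1 \<in> \<sigma>1" "v2 \<in> \<sigma>2" "- x = v1 + v2"
    using qpos_Un_decompose[OF assms(1,2) minus_x] .
  have "(u1 + v1) + (u2 + v2) = (u1 + u2) + (v1 + v2)" by (simp add: algebra_simps)
  also have "\<dots> = x + - x" using u(3) v(3) by simp
  finally have sum_eq_0: "(u1 + v1) + (u2 + v2) = 0" by simp
  then have neg: "u2 + v2 = - (u1 + v1)" by (rule minus_unique[symmetric])
  have "u1 + v1 \<in> \<sigma>2 \<or> u2 + v2 \<in> \<sigma>1"
    using qspan_Int_line_mem_or_neg_mem[OF assms(1,2,5,6) qcone_add[OF assms(1) u(1) v(1)]]
      qcone_add[OF assms(2) u(2) v(2)] neg by simp
  then have "u1 = 0 \<and> u2 = 0"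
    using strongly_convex_sum_eq_0[OF assms(3,4,2) u(1) v(1) u(2) v(2)]
      strongly_convex_sum_eq_0[OF assms(4,3,1) u(2) v(2) u(1) v(1)] sum_eq_0
    by (auto simp: add.commute)
  then show "x = 0" using u(3) by simp
qed

theorem proposition2p2:
  fixes \<sigma>1 \<sigma>2 :: "(rat ^ 'n) set" and a :: "rat ^ 'n"
  assumes "rational_polyhedral_cone \<sigma>1" and "rational_polyhedral_cone \<sigma>2"
    and "a \<in> \<sigma>1 \<inter> \<sigma>2"
    and "qspan \<sigma>1 \<inter> qspan \<sigma>2 = {q *s a | q. True}"
  shows "(strongly_convex \<sigma>1 \<and> strongly_convex \<sigma>2) \<longleftrightarrow> strongly_convex (qpos (\<sigma>1 \<union> \<sigma>2))"
proof
  have c1: "qcone \<sigma>1" and c2: "qcone \<sigma>2"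
    using assms(1,2) by (simp_all add: rational_polyhedral_cone_imp_qcone)
  show "strongly_convex (qpos (\<sigma>1 \<union> \<sigma>2))" if "strongly_convex \<sigma>1 \<and> strongly_convex \<sigma>2"
    using strongly_convex_qpos_Un[OF c1 c2 _ _ assms(3)] assms(4) that by simp
  have "\<sigma>1 \<subseteq> qpos (\<sigma>1 \<union> \<sigma>2)" "\<sigma>2 \<subseteq> qpos (\<sigma>1 \<union> \<sigma>2)"
    using subset_qpos by blast+
  then show "strongly_convex \<sigma>1 \<and> strongly_convex \<sigma>2" if "strongly_convex (qpos (\<sigma>1 \<union> \<sigma>2))"
    using strongly_convex_subset[OF that] qcone_zero[OF c1] qcone_zero[OF c2] by simp
qed

end
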